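(* Let $r\ge1$, $\mathbb{K}=\mathbb{F}_{2^r}$, and let $\mathcal{L}\subseteq\mathbb{F}_2^{N\times N}$ be a linear subspace. If $A\in\mathcal{L}\otimes_{\mathbb{F}_2}\mathbb{K}$ is nonzero and $\operatorname{rank}_{\mathbb{K}}(A)\le k$, then there exists a nonzero $B\in\mathcal{L}$ with $\operatorname{rank}_{\mathbb{F}_2}(B)\le rk$.
   Context: $\mathcal{L}\otimes_{\mathbb{F}_2}\mathbb{K}$ is identified with the $\mathbb{K}$-linear span of $\mathcal{L}$ inside $\mathbb{K}^{N\times N}$ (equivalently, the set of solutions over $\mathbb{K}$ of the homogeneous $\mathbb{F}_2$-linear equations defining $\mathcal{L}$). *)

theory Defs
  imports "HOL-Library.Z2" "Jordan_Normal_Form.DL_Rank"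
begin

definition emb2 :: "bit \<Rightarrow> 'k::field" where
  "emb2 b = (if b = 0 then 0 else 1)"

definition f2_subspace :: "nat \<Rightarrow> bit mat set \<Rightarrow> bool" where
  "f2_subspace N L \<longleftrightarrow> L \<subseteq> carrier_mat N N \<and> 0\<^sub>m N N \<in> L \<and>
     (\<forall>B\<in>L. \<forall>C\<in>L. B + C \<in> L) \<and> (\<forall>c. \<forall>B\<in>L. c \<cdot>\<^sub>m B \<in> L)"

text \<open>The K-linear span of L inside K^(N x N), i.e. L tensor_F2 K.\<close>
definition ext_span :: "nat \<Rightarrow> bit mat set \<Rightarrow> 'k::field mat set" where
  "ext_span N L = {A. A \<in> carrier_mat N N \<and>
     (\<exists>S c. finite S \<and> S \<subseteq> L \<and>
        (\<forall>i<N. \<forall>j<N. A $$ (i,j) = (\<Sum>B\<in>S. c B * emb2 (B $$ (i,j)))))}"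

end

theory Submission
  imports Defs "HOL-Number_Theory.Residues"
begin

(* Keep the field operations of bit opaque; by default simp rewrites them to xor/and and
   turns sums over bit into cardinalities. *)
declare add_bit_eq_xor [simp del] mult_bit_eq_and [simp del] sum_of_bool_eq [simp del]

text \<open>
  A field \<open>K\<close> with \<open>2^r\<close> elements is an \<open>F\<^sub>2\<close>-vector space of dimension at most \<open>r\<close>, so it
  has an \<open>F\<^sub>2\<close>-basis \<open>E\<close> with coordinate functionals \<open>co e : K \<rightarrow> F\<^sub>2\<close>. For a nonzero entry \<open>a\<close> of
  \<open>A\<close> some coordinate \<open>\<phi> = co e\<^sub>0\<close> has \<open>\<phi> a = 1\<close>, and \<open>B\<close> is obtained by applying \<open>\<phi>\<close> entrywise.
  Since \<open>\<phi>\<close> is \<open>F\<^sub>2\<close>-linear and \<open>A\<close> is a \<open>K\<close>-combination of matrices in \<open>L\<close>, \<open>B\<close> is an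
  \<open>F\<^sub>2\<close>-combination of the same matrices, hence lies in \<open>L\<close>. Writing \<open>A = \<Sum>\<^sub>t u\<^sub>t v\<^sub>t\<^sup>T\<close> with
  \<open>rank A\<close> terms and expanding each \<open>u\<^sub>t\<close> in the basis \<open>E\<close> turns \<open>B\<close> into a sum of
  \<open>|E| \<cdot> rank A \<le> r k\<close> rank-one matrices over \<open>F\<^sub>2\<close>.
\<close>

lemma two_eq_zero_of_card_eq_pow2:
  assumes "card (UNIV :: 'k::{field,finite} set) = 2 ^ r"
  shows "(2::'k) = 0"
proof -
  have "prime CHAR('k)"
    by (rule prime_CHAR_semidom) (simp add: finite_imp_CHAR_pos)
  moreover have "CHAR('k) dvd 2 ^ r"
    using CHAR_dvd_CARD[where 'a='k] assms by simp
  ultimately have "CHAR('k) = 2"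
    by (meson prime_dvd_power primes_dvd_imp_eq two_is_prime_nat)
  then show ?thesis
    by (metis of_nat_CHAR of_nat_numeral)
qed

lemma emb2_simps [simp]: "emb2 0 = 0" "emb2 1 = 1"
  by (auto simp: emb2_def)

definition bit_scale :: "bit \<Rightarrow> 'k::field \<Rightarrow> 'k" where
  "bit_scale b x = emb2 b * x"

lemma vector_space_bit_scale:
  assumes "(2::'k::field) = 0"
  shows "vector_space (bit_scale :: bit \<Rightarrow> 'k \<Rightarrow> 'k)"
proof unfold_locales
  fix a b :: bit and x y :: 'k
  have "x + x = 0"
    using assms by (metis mult_2 mult_zero_left)
  then show "bit_scale (a + b) x = bit_scale a x + bit_scale b x"
    by (cases a; cases b) (auto simp: bit_scale_def)
  show "bit_scale a (x + y) = bit_scale a x + bit_scale a y"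
    by (simp add: bit_scale_def algebra_simps)
  show "bit_scale a (bit_scale b x) = bit_scale (a * b) x"
    by (cases a; cases b) (auto simp: bit_scale_def)
  show "bit_scale 1 x = x"
    by (simp add: bit_scale_def)
qed

text \<open>Distinct subsets of an independent set have distinct sums, since over \<open>F\<^sub>2\<close> the
  representation of \<open>\<Sum>X\<close> is the indicator function of \<open>X\<close>.\<close>

lemma bit_independent_card_le:
  fixes B :: "'k::{field,finite} set"
  assumes "(2::'k) = 0" and "\<not> module.dependent bit_scale B"
  shows "2 ^ card B \<le> card (UNIV :: 'k set)"
proof -
  interpret v: vector_space "bit_scale :: bit \<Rightarrow> 'k \<Rightarrow> 'k"
    using vector_space_bit_scale[OF assms(1)] .
  have representation_Sum: "v.representation B (\<Sum>X) = (\<lambda>b. if b \<in> X then 1 else 0)"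
    if "X \<subseteq> B" for X
  proof (rule v.representation_eqI[OF assms(2)])
    show "\<Sum>X \<in> v.span B"
      using that by (simp add: v.span_base v.span_sum subset_iff)
    have "{b. (if b \<in> X then 1::bit else 0) \<noteq> 0} = X"
      by auto
    then show "(\<Sum>b | (if b \<in> X then 1::bit else 0) \<noteq> 0. bit_scale (if b \<in> X then 1 else 0) b) = \<Sum>X"
      by (simp add: bit_scale_def)
  qed (use that in \<open>auto split: if_splits\<close>)
  have "inj_on Sum (Pow B)"
  proof (rule inj_onI)
    fix X Y assume "X \<in> Pow B" "Y \<in> Pow B" "\<Sum>X = (\<Sum>Y :: 'k)"
    then have indicators_eq: "(\<lambda>b. if b \<in> X then 1::bit else 0) = (\<lambda>b. if b \<in> Y then 1 else 0)"
      using representation_Sum[of X] representation_Sum[of Y] by auto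
    have "b \<in> X \<longleftrightarrow> b \<in> Y" for b
      using fun_cong[OF indicators_eq, of b] by (auto split: if_splits)
    then show "X = Y"
      by blast
  qed
  then have "card (Pow B) \<le> card (UNIV :: 'k set)"
    by (rule card_inj_on_le) auto
  then show ?thesis
    by (simp add: card_Pow)
qed

lemma finite_field_bit_coordinates:
  assumes "card (UNIV :: 'k set) = 2 ^ r"
  obtains E :: "'k::{field,finite} set" and co :: "'k \<Rightarrow> 'k \<Rightarrow> bit"
  where "finite E" "card E \<le> r" "\<And>e. additive (co e)"
    "\<And>x. (\<Sum>e\<in>E. emb2 (co e x) * e) = x"
proof -
  have char: "(2::'k) = 0"
    using two_eq_zero_of_card_eq_pow2[OF assms] .
  interpret v: vector_space "bit_scale :: bit \<Rightarrow> 'k \<Rightarrow> 'k"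
    using vector_space_bit_scale[OF char] .
  obtain E where "v.independent E" "UNIV \<subseteq> v.span E"
    using v.basis_exists[of UNIV] by blast
  then have E: "v.independent E" "v.span E = UNIV"
    by auto
  define co where "co e x = v.representation E x e" for e x
  have "additive (co e)" for e
  proof
    show "co e (x + y) = co e x + co e y" for x y
      using E by (simp add: co_def v.representation_add)
  qed
  moreover have "(\<Sum>e\<in>E. emb2 (co e x) * e) = x" for x
    using v.sum_representation_eq[OF E(1), of x E] E(2)
    unfolding co_def bit_scale_def by simp
  moreover have "card E \<le> r"
    using bit_independent_card_le[OF char E(1)] assms by simp
  ultimately show ?thesis
    using that[of E co] by simp
qed

lemma nonzero_bit_coordinate:
  fixes x :: "'k::field"
  assumes "(\<Sum>e\<in>E. emb2 (co e x) * e) = x" and "x \<noteq> 0"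
  obtains e where "co e x = 1"
proof -
  have "\<exists>e\<in>E. co e x \<noteq> 0"
  proof (rule ccontr)
    assume "\<not> ?thesis"
    then have "(\<Sum>e\<in>E. emb2 (co e x) * e) = 0"
      by simp
    with assms show False
      by simp
  qed
  then show ?thesis
    using that by auto
qed

lemma additive_emb2_mult:
  assumes "additive (\<phi> :: 'k::field \<Rightarrow> bit)"
  shows "\<phi> (emb2 b * y) = b * \<phi> y"
  using additive.zero[OF assms] by (cases b) auto

lemma mat_nonzero_entry:
  assumes "A \<in> carrier_mat n nc" and "A \<noteq> 0\<^sub>m n nc"
  obtains i j where "i < n" "j < nc" "A $$ (i,j) \<noteq> 0"
proof -
  have "\<exists>i<n. \<exists>j<nc. A $$ (i,j) \<noteq> 0"
  proof (rule ccontr)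
    assume "\<not> ?thesis"
    then have "A = 0\<^sub>m n nc"
      using assms(1) by (intro eq_matI) auto
    with assms(2) show False
      by contradiction
  qed
  then show ?thesis
    using that by blast
qed

lemma rank_sum_of_products_le:
  fixes f :: "'t \<Rightarrow> nat \<Rightarrow> 'a::field" and g :: "'t \<Rightarrow> nat \<Rightarrow> 'a"
  assumes "finite I"
  shows "vec_space.rank n (mat n nc (\<lambda>(i,j). \<Sum>t\<in>I. f t i * g t j)) \<le> card I"
  using assms
proof (induction I rule: finite_induct)
  case empty
  have "mat n nc (\<lambda>_. 0::'a) = 0\<^sub>m n nc"
    by (rule eq_matI) auto
  then show ?case
    by (simp add: vec_space.rank_0I)
next
  case (insert t I)
  let ?M\<^sub>t = "mat n nc (\<lambda>(i,j). f t i * g t j)"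
  let ?M\<^sub>I = "mat n nc (\<lambda>(i,j). \<Sum>s\<in>I. f s i * g s j)"
  have "mat n nc (\<lambda>(i,j). \<Sum>s\<in>insert t I. f s i * g s j) = ?M\<^sub>t + ?M\<^sub>I"
    by (rule eq_matI) (auto simp: insert)
  moreover have "vec_space.rank n ?M\<^sub>t \<le> 1"
    by (rule vec_space.rank_le_1_product_entries[of _ n nc "f t" "g t"]) auto
  moreover have "vec_space.rank n (?M\<^sub>t + ?M\<^sub>I) \<le> vec_space.rank n ?M\<^sub>t + vec_space.rank n ?M\<^sub>I"
    by (rule vec_space.rank_subadditive) auto
  ultimately show ?case
    using insert by simp
qed

text \<open>Every column is a combination of a maximal independent set \<open>T\<close> of columns, and \<open>|T| = rank A\<close>.\<close>

lemma rank_decomposition_sum_of_products: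
  fixes A :: "'a::field mat"
  assumes A: "A \<in> carrier_mat n nc"
  obtains T :: "'a vec set" and g :: "'a vec \<Rightarrow> nat \<Rightarrow> 'a"
  where "finite T" "card T = vec_space.rank n A"
    "\<And>i j. i < n \<Longrightarrow> j < nc \<Longrightarrow> A $$ (i,j) = (\<Sum>w\<in>T. w $ i * g w j)"
proof -
  interpret vec_space "TYPE('a)" n .
  let ?indpt_cols = "\<lambda>T. T \<subseteq> set (cols A) \<and> lin_indpt T"
  have "lin_indpt {}"
    unfolding lin_dep_def by auto
  then obtain T where T: "finite T" "maximal T ?indpt_cols"
    using maximal_exists_superset[of "set (cols A)" ?indpt_cols "{}"] by auto
  have cols: "set (cols A) \<subseteq> carrier_vec n"
    using A cols_dim by blast
  have T_sub: "T \<subseteq> set (cols A)" "lin_indpt T"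
    using T(2) unfolding maximal_def by auto
  then have T_carrier: "T \<subseteq> carrier_vec n"
    using cols by blast
  have cols_span: "set (cols A) \<subseteq> span T"
  proof
    fix v assume v: "v \<in> set (cols A)"
    have v_carrier: "v \<in> carrier_vec n"
      using cols v by blast
    show "v \<in> span T"
    proof (rule ccontr)
      assume v_span: "v \<notin> span T"
      then have v_T: "v \<notin> T"
        using T_carrier span_mem by blast
      then have "lin_indpt (T \<union> {v})"
        using lin_dep_iff_in_span[OF _ T_sub(2) _ v_T] T_carrier v_carrier v_span by simp
      then have "T \<union> {v} = T"
        using T(2) T_sub(1) v unfolding maximal_def by blast
      then show False
        using v_T by blast
    qed
  qed
  have "\<exists>a. lincomb a T = col A j" if "j < nc" for j
  proof -
    have "col A j \<in> set (cols A)"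
      using A that by (simp add: cols_def)
    then show ?thesis
      using cols_span finite_in_span[OF T(1) T_carrier] by blast
  qed
  then obtain a where a: "\<And>j. j < nc \<Longrightarrow> lincomb (a j) T = col A j"
    by metis
  show ?thesis
  proof (rule that[of T "\<lambda>w j. a j w", OF T(1)])
    show "card T = rank A"
      using rank_card_indpt[OF A T(2)] by simp
    show "A $$ (i,j) = (\<Sum>w\<in>T. w $ i * a j w)" if "i < n" "j < nc" for i j
    proof -
      have "A $$ (i,j) = lincomb (a j) T $ i"
        using A a that by simp
      also have "\<dots> = (\<Sum>w\<in>T. a j w * w $ i)"
        by (rule lincomb_index[OF that(1) T_carrier])
      finally show ?thesis
        by (simp add: mult.commute)
    qed
  qed
qed

lemma rank_map_mat_additive_le:
  fixes A :: "'k::field mat" and \<phi> :: "'k \<Rightarrow> bit" and co :: "'k \<Rightarrow> 'k \<Rightarrow> bit"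
  assumes A: "A \<in> carrier_mat n nc"
    and \<phi>: "additive \<phi>"
    and E: "finite E" "\<And>x. (\<Sum>e\<in>E. emb2 (co e x) * e) = x"
  shows "vec_space.rank n (map_mat \<phi> A) \<le> card E * vec_space.rank n A"
proof -
  obtain T g where T: "finite T" "card T = vec_space.rank n A"
    and A_eq: "\<And>i j. i < n \<Longrightarrow> j < nc \<Longrightarrow> A $$ (i,j) = (\<Sum>w\<in>T. w $ i * g w j)"
    by (rule rank_decomposition_sum_of_products[OF A]) (rule that)
  have "\<phi> (A $$ (i,j)) = (\<Sum>(w,e)\<in>T \<times> E. co e (w $ i) * \<phi> (e * g w j))"
    if "i < n" "j < nc" for i j
  proof -
    have "w $ i * g w j = (\<Sum>e\<in>E. emb2 (co e (w $ i)) * (e * g w j))" for w :: "'k vec"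
    proof -
      have "w $ i * g w j = (\<Sum>e\<in>E. emb2 (co e (w $ i)) * e) * g w j"
        by (simp only: E(2))
      then show ?thesis
        by (simp add: sum_distrib_right mult.assoc)
    qed
    then have "\<phi> (A $$ (i,j)) = (\<Sum>w\<in>T. \<Sum>e\<in>E. co e (w $ i) * \<phi> (e * g w j))"
      using that by (simp add: A_eq additive.sum[OF \<phi>] additive_emb2_mult[OF \<phi>])
    then show ?thesis
      by (simp add: sum.cartesian_product)
  qed
  then have "map_mat \<phi> A = mat n nc (\<lambda>(i,j). \<Sum>t\<in>T \<times> E. co (snd t) (fst t $ i) * \<phi> (snd t * g (fst t) j))"
    using A by (intro eq_matI) (auto simp: case_prod_beta)
  also have "vec_space.rank n \<dots> \<le> card (T \<times> E)"
    using T(1) E(1) by (intro rank_sum_of_products_le) simp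
  finally show ?thesis
    using T(2) by (simp add: card_cartesian_product mult.commute)
qed

lemma f2_subspace_lincomb_mem:
  assumes L: "f2_subspace N L" and "finite S" "S \<subseteq> L"
  shows "mat N N (\<lambda>(i,j). \<Sum>C\<in>S. d C * C $$ (i,j)) \<in> L"
  using assms(2,3)
proof (induction S rule: finite_induct)
  case empty
  have "mat N N (\<lambda>_. 0::bit) = 0\<^sub>m N N"
    by (rule eq_matI) auto
  then show ?case
    using L unfolding f2_subspace_def by simp
next
  case (insert C S)
  then have C: "C \<in> L" "C \<in> carrier_mat N N"
    using L unfolding f2_subspace_def by auto
  have eq: "mat N N (\<lambda>(i,j). \<Sum>C'\<in>insert C S. d C' * C' $$ (i,j)) =
      d C \<cdot>\<^sub>m C + mat N N (\<lambda>(i,j). \<Sum>C'\<in>S. d C' * C' $$ (i,j))"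
    using C(2) insert.hyps by (intro eq_matI) auto
  show ?case
    unfolding eq using C(1) insert L unfolding f2_subspace_def by blast
qed

lemma map_mat_additive_ext_span_mem:
  assumes L: "f2_subspace N L" and A: "A \<in> ext_span N L" and \<phi>: "additive \<phi>"
  shows "map_mat \<phi> A \<in> L"
proof -
  obtain S c where S: "finite S" "S \<subseteq> L" and A_carrier: "A \<in> carrier_mat N N"
    and A_eq: "\<And>i j. i < N \<Longrightarrow> j < N \<Longrightarrow> A $$ (i,j) = (\<Sum>B\<in>S. c B * emb2 (B $$ (i,j)))"
    using A unfolding ext_span_def by blast
  have "\<phi> (A $$ (i,j)) = (\<Sum>B\<in>S. \<phi> (c B) * B $$ (i,j))" if "i < N" "j < N" for i j
    using that by (simp add: A_eq additive.sum[OF \<phi>] mult.commute[of _ "emb2 _"]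
        additive_emb2_mult[OF \<phi>] mult.commute[of "_ $$ _"])
  then have "map_mat \<phi> A = mat N N (\<lambda>(i,j). \<Sum>B\<in>S. \<phi> (c B) * B $$ (i,j))"
    using A_carrier by (intro eq_matI) auto
  then show ?thesis
    using f2_subspace_lincomb_mem[OF L S] by simp
qed

theorem lemma3p12:
  fixes L :: "bit mat set" and A :: "'k::{field,finite} mat"
    and N k r :: nat
  assumes "r \<ge> 1"
    and "card (UNIV :: 'k set) = 2 ^ r"
    and "f2_subspace N L"
    and "A \<in> ext_span N L"
    and "A \<noteq> 0\<^sub>m N N"
    and "vec_space.rank N A \<le> k"
  shows "\<exists>B\<in>L. B \<noteq> 0\<^sub>m N N \<and> vec_space.rank N B \<le> r * k"
proof -
  obtain E and co :: "'k \<Rightarrow> 'k \<Rightarrow> bit" where E: "finite E" "card E \<le> r" "\<And>e. additive (co e)"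
    and co: "\<And>x. (\<Sum>e\<in>E. emb2 (co e x) * e) = x"
    by (rule finite_field_bit_coordinates[OF assms(2)]) (rule that)
  have A_carrier: "A \<in> carrier_mat N N"
    using CollectD[OF assms(4)[unfolded ext_span_def]] by (rule conjunct1)
  obtain i j where ij: "i < N" "j < N" "A $$ (i,j) \<noteq> 0"
    using mat_nonzero_entry[OF A_carrier assms(5)] by blast
  obtain e where e: "co e (A $$ (i,j)) = 1"
    using nonzero_bit_coordinate[where co = co, OF co ij(3)] by blast
  let ?B = "map_mat (co e) A"
  have "vec_space.rank N ?B \<le> card E * vec_space.rank N A"
    using rank_map_mat_additive_le[OF A_carrier E(3) E(1) co] .
  also have "\<dots> \<le> r * k"
    using E(2) assms(6) by (rule mult_le_mono)
  finally have rank_B: "vec_space.rank N ?B \<le> r * k" .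
  have "?B $$ (i,j) = 1"
    using ij e A_carrier by simp
  then have "?B \<noteq> 0\<^sub>m N N"
    using ij by auto
  then have "?B \<noteq> 0\<^sub>m N N \<and> vec_space.rank N ?B \<le> r * k"
    using rank_B by (rule conjI)
  moreover have "?B \<in> L"
    using map_mat_additive_ext_span_mem[OF assms(3,4) E(3)] .
  ultimately show ?thesis
    by (rule bexI)
qed

end
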